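(* Let $a,d$ be real numbers and let $A_{n,k}(a,d)$ be the general Eulerian numbers defined below. Then for every integer $n\ge 1$ and every positive integer $i$, $$(a+(i-1)d)^n=\sum_{j=-1}^{n-1}A_{n,j}(a,d)\binom{i+j}{n}.$$
   Context: For real numbers $a,d$, the general Eulerian numbers $A_{n,k}(a,d)$ (integers $n\ge 0$, $k$) are defined by $A_{0,-1}(a,d)=1$, $A_{n,k}(a,d)=0$ whenever $k\ge n$ or $k\le -2$ (in particular $A_{0,k}=0$ for $k\neq -1$), and for $n\ge 1$, $-1\le k\le n-1$: $$A_{n,k}(a,d)=(-a+(k+2)d)A_{n-1,k}(a,d)+(a+(n-k-1)d)A_{n-1,k-1}(a,d).$$ For a nonnegative integer $x$ and $n\ge 0$, $\binom{x}{n}=x(x-1)\cdots(x-n+1)/n!$ (so it is $0$ when $x<n$). *)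

theory Defs
  imports Complex_Main
begin

fun genEuler :: "real \<Rightarrow> real \<Rightarrow> nat \<Rightarrow> int \<Rightarrow> real" where
  "genEuler a d 0 k = (if k = -1 then 1 else 0)"
| "genEuler a d (Suc n) k =
     (if k \<ge> int (Suc n) \<or> k \<le> -2 then 0
      else (- a + of_int (k + 2) * d) * genEuler a d n k
         + (a + of_int (int (Suc n) - k - 1) * d) * genEuler a d n (k - 1))"

end

theory Submission
  imports Defs
begin

text \<open>Multiplying the expansion of \<open>c\<^sup>n\<close>, where \<open>c = a + (i - 1) d\<close>, by \<open>c\<close>
  and rewriting each product \<open>c \<cdot> (m choose n)\<close> through Pascal's rule and the absorption identity
  \<open>(m - n) \<cdot> (m + 1 choose n + 1) = (m + 1) \<cdot> (m choose n + 1)\<close> produces the two terms of the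
  recurrence defining \<open>A\<^sub>n\<^sub>+\<^sub>1\<^sub>,\<^sub>k\<close>.\<close>

lemma genEuler_eq_0: "int n \<le> k \<or> k \<le> -2 \<Longrightarrow> genEuler a d n k = 0"
  by (cases n) auto

lemma genEuler_Suc_shifted:
  assumes "t \<le> Suc n"
  shows "genEuler a d (Suc n) (int t - 1)
    = ((real t + 1) * d - a) * genEuler a d n (int t - 1)
      + (a + (real n + 1 - real t) * d) * genEuler a d n (int t - 2)"
  using assms by (simp add: algebra_simps)

lemma binomial_absorb_Suc:
  fixes m n :: nat
  shows "(real m - real n) * real (Suc m choose Suc n) = (real m + 1) * real (m choose Suc n)"
proof (cases "n \<le> m")
  case True
  have "(Suc m - Suc n) * (Suc m choose Suc n) = Suc m * (m choose Suc n)"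
    using binomial_absorb_comp[of "Suc m" "Suc n"] by simp
  then have "real (m - n) * real (Suc m choose Suc n) = real (Suc m) * real (m choose Suc n)"
    by (metis diff_Suc_Suc of_nat_mult)
  then show ?thesis
    using True by (simp add: of_nat_diff)
qed (simp add: binomial_eq_0)

lemma times_binomial_split:
  fixes m n :: nat and c d :: real
  shows "c * real (m choose n)
    = (c - (real m - real n) * d) * real (Suc m choose Suc n)
      + ((real m + 1) * d - c) * real (m choose Suc n)"
proof -
  have "real (m choose n) = real (Suc m choose Suc n) - real (m choose Suc n)"
    by simp
  then show ?thesis
    using binomial_absorb_Suc[of m n] by (simp add: algebra_simps)
qed

lemma power_eq_sum_genEuler_binomial:
  fixes a d :: real and n i :: nat
  assumes "i \<ge> 1"
  shows "(a + (real i - 1) * d) ^ n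
    = (\<Sum>t\<le>n. genEuler a d n (int t - 1) * real ((i + t - 1) choose n))"
proof (induction n)
  case 0
  then show ?case by simp
next
  case (Suc n)
  define c where "c = a + (real i - 1) * d"
  define E where "E t = genEuler a d n (int t - 1)" for t
  define up where "up t = (a + (real n - real t) * d) * E t * real ((i + t) choose Suc n)" for t
  define stay where "stay t = ((real t + 1) * d - a) * E t * real ((i + t - 1) choose Suc n)" for t
  have c_split: "c * real ((i + t - 1) choose n)
      = (a + (real n - real t) * d) * real ((i + t) choose Suc n)
        + ((real t + 1) * d - a) * real ((i + t - 1) choose Suc n)" for t
  proof -
    have "Suc (i + t - 1) = i + t" and "real (i + t - 1) = real i + real t - 1"
      using assms by (simp_all add: of_nat_diff)
    then show ?thesis
      using times_binomial_split[of c "i + t - 1" n d] by (simp add: c_def algebra_simps)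
  qed
  have "c ^ Suc n = (\<Sum>t\<le>n. E t * (c * real ((i + t - 1) choose n)))"
    using Suc by (simp add: c_def E_def sum_distrib_left algebra_simps)
  also have "\<dots> = (\<Sum>t\<le>n. up t + stay t)"
    unfolding c_split up_def stay_def by (simp add: algebra_simps)
  also have "\<dots> = (\<Sum>t\<le>n. up t) + (\<Sum>t\<le>n. stay t)"
    by (rule sum.distrib)
  \<comment> \<open>Reindexing \<open>up\<close> by \<open>t \<mapsto> t + 1\<close>; the added boundary terms carry \<open>A\<^sub>n\<^sub>,\<^sub>-\<^sub>2 = A\<^sub>n\<^sub>,\<^sub>n = 0\<close>.\<close>
  also have "(\<Sum>t\<le>n. up t) = (\<Sum>t\<le>Suc n. (a + (real n + 1 - real t) * d)
      * genEuler a d n (int t - 2) * real ((i + t - 1) choose Suc n))"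
    by (subst sum.atMost_Suc_shift) (simp add: up_def E_def genEuler_eq_0 algebra_simps)
  also have "(\<Sum>t\<le>n. stay t) = (\<Sum>t\<le>Suc n. ((real t + 1) * d - a) * E t
      * real ((i + t - 1) choose Suc n))"
    by (simp add: stay_def E_def genEuler_eq_0)
  finally show ?case
    by (simp add: c_def E_def genEuler_Suc_shifted sum.distrib[symmetric] algebra_simps)
qed

theorem lemma2p3:
  fixes a d :: real and n i :: nat
  assumes "n \<ge> 1" and "i \<ge> 1"
  shows "(a + (real i - 1) * d) ^ n
    = (\<Sum>j\<in>{-1..int n - 1}. genEuler a d n j * real (nat (int i + j) choose n))"
proof -
  have "{-1..int n - 1} = (\<lambda>t. int t - 1) ` {..n}"
  proof (intro subset_antisym subsetI)
    fix j assume "j \<in> {-1..int n - 1}"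
    then show "j \<in> (\<lambda>t. int t - 1) ` {..n}"
      by (intro image_eqI[of _ _ "nat (j + 1)"]) auto
  qed auto
  moreover have "inj_on (\<lambda>t. int t - 1) {..n}"
    by (simp add: inj_on_def)
  moreover have "nat (int i + (int t - 1)) = i + t - 1" for t
    using assms(2) by linarith
  ultimately show ?thesis
    using power_eq_sum_genEuler_binomial[OF assms(2)] by (simp add: sum.reindex)
qed

end
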